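(* Let $\boldsymbol{q}=(q_0,q_1,\ldots,q_n)$ be an instance of a symbolic generalized matrix chain and let $m$ be an index with $q_m=\min_i q_i$. Let $j\in\{1,\ldots,n\}$. Suppose $t_{\rm e}$ is a term of the form $\phi_{K_{\rm e}}(q_{j-1},q_j,q_m)$ or $\phi_{K_{\rm e}}(q_m,q_{j-1},q_j)$ in the cost function of one variant, and $t_{\rm o}$ is a term of the form $\phi_{K_{\rm o}}(q_{j-1},q_j,q_z)$ or $\phi_{K_{\rm o}}(q_z,q_{j-1},q_j)$ (for some index $z$) in the cost function of a variant (possibly the same variant). Then there exists a constant $\alpha\in\mathbb{R}_+$ (determined by the kernel cost functions of $K_{\rm e}$ and $K_{\rm o}$, not by the instance) such that $t_{\rm e}\le \alpha\, t_{\rm o}$.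
   Context: A generalized matrix chain (GMC) is a product $\mathrm{op}(M_1)\mathrm{op}(M_2)\cdots\mathrm{op}(M_n)$ where $M_i$ has size $q_{i-1}\times q_i$, $\mathrm{op}(M)\in\{M,M^T,M^{-1},M^{-T}\}$, and each $M_i$ carries a structure (general, symmetric, lower-triangular, upper-triangular; every non-general structure implies the matrix is square) and a property (singular, invertible, symmetric positive-definite, orthogonal). The shape of the chain (structures, properties, unary operators) is fixed; the sizes are symbolic. An instance is a vector $\boldsymbol{q}=(q_0,\ldots,q_n)\in\mathbb{N}^{n+1}$ consistent with the shape: if $M_i$ is necessarily square (non-general structure or inverted) then $q_{i-1}=q_i$. Transposition is ignored (it does not affect costs). Each parenthesization of the chain determines exactly one variant: a sequence of $n-1$ associations $\{(K_i,(a_i,b_i,c_i))\}_{i=1}^{n-1}$ with $0\le a_i<b_i<c_i\le n$, where the $i$-th association combines, via kernel $K_i$, an operand of size $q_{a_i}\times q_{b_i}$ with an operand of size $q_{b_i}\times q_{c_i}$, producing a $q_{a_i}\times q_{c_i}$ result. The variant is built by performing the leftmost available association first and, for each association: (1) if both operands are inverted, rewriting $X^{-1}Y^{-1}=(YX)^{-1}$ and propagating the inversion to the result; also propagating an inversion when one operand is inverted and general or symmetric and the other is orthogonal or non-singular triangular; (2) assigning the most specialized kernel for the operands' features (matrix-product kernels GEMM, SYMM, TRMM, SYSYMM, TRSYMM, TRTRMM; linear-solve kernels GEGESV, GESYSV, GETRSV, SYGESV, SYSYSV, SYTRSV, POGESV, POSYSV, POTRSV, TRSM, TRSYSV, TRTRSV,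 where in a solve the inverted operand is the coefficient matrix); (3) inferring structure, property and size of the result by fixed rules. The cost (FLOPs) of a variant $A$ on instance $\boldsymbol{q}$ is $T(A,\boldsymbol{q})=\sum_{(K,(a,b,c))\in A}\phi_K(q_a,q_b,q_c)$; each summand is called a term of the cost function. Every kernel cost $\phi_K$ has one of three forms with positive kernel-specific constants: Type I: $\phi(a,b,c)=\beta abc$; Type IIa: $\phi(a,b,c)=\beta_1a^3+\beta_2a^2c$; Type IIb: $\phi(a,b,c)=\beta_1c^3+\beta_2c^2a$. Type II kernels are exactly those solving a linear system with a non-triangular coefficient matrix and a general rectangular right-hand side (GEGESV with $\beta_1=2/3,\beta_2=2$; SYGESV and POGESV with $\beta_1=1/3,\beta_2=2$), IIa when the coefficient matrix is on the left (then $a=b$) and IIb when on the right (then $b=c$); all other kernels are Type I (e.g. GEMM $\beta=2$, TRMM and TRSM $\beta=1$, and kernels with two square operands such as SYSYMM with cost $2m^3$). *)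

theory Defs
  imports Main "HOL.Real"
begin

datatype struct = Gen | Sym | Low | Upp
datatype mprop = Singular | Invertible | SPD | Orthogonal
datatype uop = OpId | OpT | OpInv | OpInvT

definition inverted :: "uop \<Rightarrow> bool" where
  "inverted u \<longleftrightarrow> u = OpInv \<or> u = OpInvT"

text \<open>Shape of a chain: length n, and for i in 1..n structure, property and unary
  operator of M_i (transposition is ignored for costs).\<close>
record gmc =
  len :: nat
  st  :: "nat \<Rightarrow> struct"
  pr  :: "nat \<Rightarrow> mprop"
  uo  :: "nat \<Rightarrow> uop"

definition necessarily_square :: "gmc \<Rightarrow> nat \<Rightarrow> bool" where
  "necessarily_square G i \<longleftrightarrow>
     st G i \<noteq> Gen \<or> inverted (uo G i) \<or> pr G i \<noteq> Singular"

definition is_instance :: "gmc \<Rightarrow> (nat \<Rightarrow> nat) \<Rightarrow> bool" where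
  "is_instance G q \<longleftrightarrow>
     (\<forall>i \<le> len G. 0 < q i) \<and>
     (\<forall>i \<in> {1..len G}. necessarily_square G i \<longrightarrow> q (i - 1) = q i)"

datatype kname = GEMM | SYMM | TRMM | SYSYMM | TRSYMM | TRTRMM
  | GEGESV | GESYSV | GETRSV | SYGESV | SYSYSV | SYTRSV
  | POGESV | POSYSV | POTRSV | TRSM | TRSYSV | TRTRSV

text \<open>A kernel together with a flag telling whether the coefficient matrix of a
  solve is on the left (True) or on the right (False); product kernels use True.\<close>
type_synonym kernel = "kname \<times> bool"
type_synonym assoc = "kernel \<times> (nat \<times> nat \<times> nat)"

definition typeII :: "kname \<Rightarrow> bool" where
  "typeII k \<longleftrightarrow> k \<in> {GEGESV, SYGESV, POGESV}"

definition phi :: "(kname \<Rightarrow> real \<times> real) \<Rightarrow> kernel \<Rightarrow> real \<Rightarrow> real \<Rightarrow> real \<Rightarrow> real" where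
  "phi beta K a b c =
     (let (k, left) = K; (b1, b2) = beta k in
      if typeII k then
        (if left then b1 * a ^ 3 + b2 * a ^ 2 * c else b1 * c ^ 3 + b2 * c ^ 2 * a)
      else b1 * a * b * c)"

definition term_cost :: "(kname \<Rightarrow> real \<times> real) \<Rightarrow> (nat \<Rightarrow> nat) \<Rightarrow> assoc \<Rightarrow> real" where
  "term_cost beta q t =
     (case t of (K, (a, b, c)) \<Rightarrow> phi beta K (real (q a)) (real (q b)) (real (q c)))"

datatype feat = Feat (fstruct: struct) (fprop: mprop) (finv: bool)

definition is_GS :: "feat \<Rightarrow> bool" where
  "is_GS X \<longleftrightarrow> fstruct X = Gen \<or> fstruct X = Sym"

definition is_tri :: "feat \<Rightarrow> bool" where
  "is_tri X \<longleftrightarrow> fstruct X = Low \<or> fstruct X = Upp"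

definition special :: "feat \<Rightarrow> bool" where
  "special X \<longleftrightarrow> fprop X = Orthogonal \<or> (is_tri X \<and> fprop X \<noteq> Singular)"

definition prod_kernel :: "feat \<Rightarrow> feat \<Rightarrow> kname" where
  "prod_kernel X Y =
     (let s = fstruct X; t = fstruct Y in
      if s = Gen \<and> t = Gen then GEMM
      else if (s = Sym \<and> t = Gen) \<or> (s = Gen \<and> t = Sym) then SYMM
      else if (is_tri X \<and> t = Gen) \<or> (s = Gen \<and> is_tri Y) then TRMM
      else if s = Sym \<and> t = Sym then SYSYMM
      else if is_tri X \<and> is_tri Y then TRTRMM
      else TRSYMM)"

definition solve_kernel :: "feat \<Rightarrow> feat \<Rightarrow> kname" where
  "solve_kernel A B =
     (let r = fstruct B in
      if fstruct A = Gen then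
        (if r = Gen then GEGESV else if r = Sym then GESYSV else GETRSV)
      else if fstruct A = Sym \<and> fprop A = SPD then
        (if r = Gen then POGESV else if r = Sym then POSYSV else POTRSV)
      else if fstruct A = Sym then
        (if r = Gen then SYGESV else if r = Sym then SYSYSV else SYTRSV)
      else
        (if r = Gen then TRSM else if r = Sym then TRSYSV else TRTRSV))"

definition coef_kernel :: "feat \<Rightarrow> feat \<Rightarrow> bool \<Rightarrow> kernel" where
  "coef_kernel A B left =
     (if fprop A = Orthogonal then (prod_kernel A B, True) else (solve_kernel A B, left))"

definition infer :: "feat \<Rightarrow> feat \<Rightarrow> bool \<Rightarrow> feat" where
  "infer X Y i =
     Feat (if fstruct X = Low \<and> fstruct Y = Low then Low
           else if fstruct X = Upp \<and> fstruct Y = Upp then Upp else Gen)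
          (if fprop X = Orthogonal \<and> fprop Y = Orthogonal then Orthogonal
           else if fprop X \<noteq> Singular \<and> fprop Y \<noteq> Singular then Invertible
           else Singular)
          i"

definition combine :: "feat \<Rightarrow> feat \<Rightarrow> kernel \<times> feat" where
  "combine X Y =
     (if finv X \<and> finv Y then ((prod_kernel Y X, True), infer X Y True)
      else if finv X \<and> is_GS X \<and> special Y then (coef_kernel Y X True, infer X Y True)
      else if finv Y \<and> is_GS Y \<and> special X then (coef_kernel X Y False, infer X Y True)
      else if finv X then (coef_kernel X Y True, infer X Y False)
      else if finv Y then (coef_kernel Y X False, infer X Y False)
      else ((prod_kernel X Y, True), infer X Y False))"

definition leaf_feat :: "gmc \<Rightarrow> nat \<Rightarrow> feat" where
  "leaf_feat G i = Feat (st G i) (pr G i) (inverted (uo G i))"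

text \<open>Parenthesizations as binary trees; a tree with k leaves starting at
  boundary a covers M_(a+1) ... M_(a+k).\<close>
datatype ptree = Leaf | Node ptree ptree

fun nleaves :: "ptree \<Rightarrow> nat" where
  "nleaves Leaf = 1"
| "nleaves (Node l r) = nleaves l + nleaves r"

fun build :: "gmc \<Rightarrow> ptree \<Rightarrow> nat \<Rightarrow> feat \<times> assoc list" where
  "build G Leaf a = (leaf_feat G (Suc a), [])"
| "build G (Node l r) a =
     (let (fx, ax) = build G l a;
          b = a + nleaves l;
          (fy, ay) = build G r b;
          c = b + nleaves r;
          (K, fz) = combine fx fy
      in (fz, ax @ ay @ [(K, (a, b, c))]))"

definition variants :: "gmc \<Rightarrow> assoc list set" where
  "variants G = {snd (build G t 0) | t. nleaves t = len G}"

end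

theory Submission
  imports Defs
begin

text \<open>
  An operand whose features force it to be square (inverted, structured or non-singular) really
  is square, and combining two operands preserves this. Type II kernels arise only for an
  inverted general or symmetric non-orthogonal coefficient, which is therefore square, so a
  Type II term reads \<open>\<beta>\<^sub>1 s^3 + \<beta>\<^sub>2 s^2 t\<close> with \<open>s\<close> the coefficient size, and every term is at
  least \<open>min \<beta>\<^sub>1 \<beta>\<^sub>2\<close> times the product of its three sizes. Both terms are compared with the
  reference volume \<open>q(j-1) q(j) q(m)\<close>, or \<open>q(j-1)^3\<close> when \<open>M\<^sub>j\<close> itself is such a coefficient:
  minimality of \<open>q(m)\<close> bounds \<open>t\<^sub>e\<close> by \<open>\<beta>\<^sub>1 + \<beta>\<^sub>2\<close> times it, while \<open>t\<^sub>o\<close> is at least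
  \<open>min \<beta>\<^sub>1 \<beta>\<^sub>2\<close> times it, for the constants of the respective kernels.
\<close>

definition size_consistent :: "(nat \<Rightarrow> nat) \<Rightarrow> feat \<Rightarrow> nat \<Rightarrow> nat \<Rightarrow> bool" where
  "size_consistent q F a b \<longleftrightarrow>
     ((finv F \<or> fstruct F \<noteq> Gen \<or> fprop F \<noteq> Singular) \<longrightarrow> q a = q b)"

definition typeII_coef :: "feat \<Rightarrow> bool" where
  "typeII_coef F \<longleftrightarrow> finv F \<and> is_GS F \<and> fprop F \<noteq> Orthogonal"

lemma typeII_coef_square: "typeII_coef F \<Longrightarrow> size_consistent q F a b \<Longrightarrow> q a = q b"
  by (simp add: typeII_coef_def size_consistent_def)

lemma not_typeII_prod_kernel: "\<not> typeII (prod_kernel X Y)"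
  by (simp add: prod_kernel_def typeII_def Let_def)

lemma typeII_solve_kernelD: "typeII (solve_kernel A B) \<Longrightarrow> is_GS A"
  by (auto simp: solve_kernel_def typeII_def Let_def is_GS_def split: if_splits)

lemma typeII_combine:
  assumes "fst (combine X Y) = (k, l)" "typeII k"
  shows "l \<and> typeII_coef X \<or> \<not> l \<and> typeII_coef Y"
  using assms
  by (auto simp: combine_def coef_kernel_def not_typeII_prod_kernel typeII_coef_def special_def
      is_tri_def is_GS_def dest!: typeII_solve_kernelD split: if_splits)

lemma combine_typeII_coef_left:
  assumes "fst (combine X Y) = (k, l)" "typeII_coef X" "size_consistent q Y b c"
  shows "q b = q c \<or> typeII k \<and> l"
  using assms
  by (cases "fstruct Y"; auto simp: combine_def coef_kernel_def typeII_coef_def special_def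
      size_consistent_def is_tri_def solve_kernel_def typeII_def Let_def is_GS_def)

lemma combine_typeII_coef_right:
  assumes "fst (combine X Y) = (k, l)" "typeII_coef Y" "size_consistent q X a b"
  shows "q a = q b \<or> typeII k \<and> \<not> l"
  using assms
  by (cases "fstruct X"; auto simp: combine_def coef_kernel_def typeII_coef_def special_def
      size_consistent_def is_tri_def solve_kernel_def typeII_def Let_def is_GS_def)

lemma size_consistent_combine:
  assumes "size_consistent q X a b" "size_consistent q Y b c"
  shows "size_consistent q (snd (combine X Y)) a c"
  using assms
  by (auto simp: combine_def infer_def size_consistent_def special_def is_tri_def split: if_splits)

lemma nleaves_pos: "0 < nleaves t"
  by (induction t) auto

lemma nleaves_eq_Suc_0_iff: "nleaves t = Suc 0 \<longleftrightarrow> t = Leaf"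
  using nleaves_pos by (cases t) (auto simp: add_is_1 gr0_conv_Suc)

text \<open>\<open>X\<close> and \<open>Y\<close> are the features of the two operands when they are combined; an operand
  covering a single matrix is that matrix itself.\<close>

definition sound_assoc :: "gmc \<Rightarrow> (nat \<Rightarrow> nat) \<Rightarrow> assoc \<Rightarrow> bool" where
  "sound_assoc G q e \<longleftrightarrow> (case e of (K, (a, b, c)) \<Rightarrow>
     a < b \<and> b < c \<and>
     (\<exists>X Y. fst (combine X Y) = K \<and> size_consistent q X a b \<and> size_consistent q Y b c \<and>
        (b = Suc a \<longrightarrow> X = leaf_feat G b) \<and> (c = Suc b \<longrightarrow> Y = leaf_feat G c)))"

lemma sound_assocE:
  assumes "sound_assoc G q (K, (a, b, c))"
  obtains X Y where "fst (combine X Y) = K" "size_consistent q X a b" "size_consistent q Y b c"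
    "b = Suc a \<longrightarrow> X = leaf_feat G b" "c = Suc b \<longrightarrow> Y = leaf_feat G c"
  using assms unfolding sound_assoc_def by auto

lemma build_sound:
  assumes inst: "is_instance G q"
  shows "a + nleaves t \<le> len G \<Longrightarrow> build G t a = (F, L) \<Longrightarrow>
    size_consistent q F a (a + nleaves t) \<and>
    (\<forall>(K, (a', b', c')) \<in> set L. sound_assoc G q (K, (a', b', c')) \<and> a \<le> a' \<and> c' \<le> a + nleaves t)"
proof (induction t arbitrary: a F L)
  case Leaf
  then have "Suc a \<in> {1..len G}" by auto
  with inst Leaf show ?case
    by (auto simp: is_instance_def size_consistent_def leaf_feat_def necessarily_square_def)
next
  case (Node l r)
  define b where "b = a + nleaves l"
  define c where "c = b + nleaves r"
  obtain X LX where X: "build G l a = (X, LX)" by fastforce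
  obtain Y LY where Y: "build G r b = (Y, LY)" by fastforce
  obtain K Z where K: "combine X Y = (K, Z)" by fastforce
  have FL: "F = Z" "L = LX @ LY @ [(K, (a, b, c))]"
    using Node.prems(2) X Y K by (auto simp: b_def c_def Let_def)
  have c: "c = a + nleaves (Node l r)" by (simp add: b_def c_def)
  have X_sound: "size_consistent q X a b"
    and LX_sound: "\<forall>(K, (a', b', c')) \<in> set LX. sound_assoc G q (K, (a', b', c')) \<and> a \<le> a' \<and> c' \<le> b"
    using Node.IH(1)[OF _ X] Node.prems(1) by (simp_all add: b_def)
  have Y_sound: "size_consistent q Y b c"
    and LY_sound: "\<forall>(K, (a', b', c')) \<in> set LY. sound_assoc G q (K, (a', b', c')) \<and> b \<le> a' \<and> c' \<le> c"
    using Node.IH(2)[OF _ Y] Node.prems(1) by (simp_all add: b_def c_def)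
  have abc: "a < b" "b < c" using nleaves_pos[of l] nleaves_pos[of r] by (auto simp: b_def c_def)
  moreover have "b = Suc a \<longrightarrow> X = leaf_feat G b"
    using X nleaves_eq_Suc_0_iff[of l] by (clarsimp simp: b_def)
  moreover have "c = Suc b \<longrightarrow> Y = leaf_feat G c"
    using Y nleaves_eq_Suc_0_iff[of r] by (clarsimp simp: c_def)
  moreover have "fst (combine X Y) = K" using K by simp
  ultimately have "sound_assoc G q (K, (a, b, c))"
    using X_sound Y_sound unfolding sound_assoc_def by blast
  moreover have "size_consistent q Z a c"
    using size_consistent_combine[OF X_sound Y_sound] K by simp
  moreover have "a \<le> b" "b \<le> c" using abc by simp_all
  ultimately show ?case
    using LX_sound LY_sound unfolding FL c[symmetric] by fastforce
qed

lemma variant_assoc_sound: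
  assumes "is_instance G q" "A \<in> variants G" "(K, (a, b, c)) \<in> set A"
  shows "sound_assoc G q (K, (a, b, c))" "c \<le> len G"
proof -
  obtain t where t: "nleaves t = len G" "A = snd (build G t 0)"
    using assms(2) unfolding variants_def by blast
  then obtain F where "build G t 0 = (F, A)"
    by (metis prod.collapse)
  with build_sound[OF assms(1), of 0 t F A] t(1) assms(3)
  show "sound_assoc G q (K, (a, b, c))" "c \<le> len G" by auto
qed

lemma cubic_cost_bounds:
  fixes b1 b2 a c :: real
  assumes "0 < b1" "0 < b2" "0 \<le> a" "0 \<le> c"
  shows "min b1 b2 * a ^ 3 \<le> b1 * a ^ 3 + b2 * a ^ 2 * c"
    and "min b1 b2 * (a ^ 2 * c) \<le> b1 * a ^ 3 + b2 * a ^ 2 * c"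
    and "b1 * a ^ 3 + b2 * a ^ 2 * c \<le> (b1 + b2) * (a ^ 2 * max a c)"
proof -
  have "min b1 b2 * a ^ 3 \<le> b1 * a ^ 3" "min b1 b2 * (a ^ 2 * c) \<le> b2 * (a ^ 2 * c)"
    using assms by (simp_all add: mult_right_mono)
  moreover have "0 \<le> b1 * a ^ 3" "0 \<le> b2 * (a ^ 2 * c)"
    using assms by simp_all
  ultimately show "min b1 b2 * a ^ 3 \<le> b1 * a ^ 3 + b2 * a ^ 2 * c"
    and "min b1 b2 * (a ^ 2 * c) \<le> b1 * a ^ 3 + b2 * a ^ 2 * c"
    by (simp_all add: mult.assoc)
  have "b1 * (a ^ 2 * a) \<le> b1 * (a ^ 2 * max a c)" "b2 * (a ^ 2 * c) \<le> b2 * (a ^ 2 * max a c)"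
    using assms by (auto intro!: mult_left_mono)
  then show "b1 * a ^ 3 + b2 * a ^ 2 * c \<le> (b1 + b2) * (a ^ 2 * max a c)"
    by (simp add: power3_eq_cube power2_eq_square algebra_simps)
qed

lemma term_cost_typeI:
  "\<not> typeII k \<Longrightarrow>
    term_cost beta q ((k, l), (a, b, c)) = fst (beta k) * (real (q a) * real (q b) * real (q c))"
  by (simp add: term_cost_def phi_def split: prod.splits)

lemma term_cost_typeII_cases:
  assumes "fst (combine X Y) = (k, l)" "size_consistent q X a b" "size_consistent q Y b c"
    and "typeII k"
  obtains (left) "l" "typeII_coef X" "q a = q b"
      "term_cost beta q ((k, l), (a, b, c)) =
         fst (beta k) * real (q a) ^ 3 + snd (beta k) * real (q a) ^ 2 * real (q c)"
  | (right) "\<not> l" "typeII_coef Y" "q b = q c"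
      "term_cost beta q ((k, l), (a, b, c)) =
         fst (beta k) * real (q c) ^ 3 + snd (beta k) * real (q c) ^ 2 * real (q a)"
  using assms typeII_combine[OF assms(1,4)]
    typeII_coef_square[of X q a b] typeII_coef_square[of Y q b c]
  by (auto simp: term_cost_def phi_def split: prod.splits)

lemma volume_le_term_cost:
  assumes "0 < fst (beta k)" "0 < snd (beta k)" "sound_assoc G q ((k, l), (a, b, c))"
  shows "min (fst (beta k)) (snd (beta k)) * (real (q a) * real (q b) * real (q c))
    \<le> term_cost beta q ((k, l), (a, b, c))"
proof -
  obtain X Y where XY: "fst (combine X Y) = (k, l)"
    "size_consistent q X a b" "size_consistent q Y b c"
    using assms(3) by (rule sound_assocE)
  show ?thesis
  proof (cases "typeII k")
    case False
    then show ?thesis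
      using assms(1,2) by (simp add: term_cost_typeI mult_right_mono)
  next
    case True
    from XY this show ?thesis
    proof (cases rule: term_cost_typeII_cases[where beta = beta])
      case left
      with cubic_cost_bounds(2)[OF assms(1,2), of "real (q a)" "real (q c)"]
      show ?thesis by (simp add: power2_eq_square)
    next
      case right
      with cubic_cost_bounds(2)[OF assms(1,2), of "real (q c)" "real (q a)"]
      show ?thesis by (simp add: power2_eq_square ac_simps)
    qed
  qed
qed

lemma typeII_coef_leaf_square:
  assumes "is_instance G q" "1 \<le> j" "j \<le> len G" "typeII_coef (leaf_feat G j)"
  shows "q (j - 1) = q j"
  using assms by (auto simp: is_instance_def typeII_coef_def leaf_feat_def necessarily_square_def)

text \<open>If \<open>M\<^sub>j\<close> is a Type II coefficient, a term involving it may cost about \<open>q(j-1)^3\<close>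
  however small \<open>q(m)\<close> is.\<close>

definition ref_volume :: "gmc \<Rightarrow> (nat \<Rightarrow> nat) \<Rightarrow> nat \<Rightarrow> nat \<Rightarrow> real" where
  "ref_volume G q m j =
     (if typeII_coef (leaf_feat G j) then real (q (j - 1)) ^ 3
      else real (q (j - 1)) * real (q j) * real (q m))"

lemma volume_le_ref_volume:
  assumes "is_instance G q" "\<forall>i \<le> len G. q m \<le> q i" "1 \<le> j" "j \<le> len G"
  shows "real (q (j - 1)) * real (q j) * real (q m) \<le> ref_volume G q m j"
proof (cases "typeII_coef (leaf_feat G j)")
  case True
  then have "q (j - 1) = q j" using typeII_coef_leaf_square assms by blast
  moreover have "q m \<le> q j" using assms by simp
  ultimately show ?thesis
    using True by (simp add: ref_volume_def power3_eq_cube mult_left_mono)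
qed (simp add: ref_volume_def)

lemma typeII_term_cost_le_ref_volume:
  assumes beta: "0 < fst (beta k)" "0 < snd (beta k)" and "typeII k"
    and inst: "is_instance G q" and min: "\<forall>i \<le> len G. q m \<le> q i"
    and j: "1 \<le> j" "j \<le> len G"
    and sound: "sound_assoc G q ((k, l), (a, b, c))"
    and form: "(a, b, c) = (j - 1, j, m) \<or> (a, b, c) = (m, j - 1, j)"
  shows "term_cost beta q ((k, l), (a, b, c)) \<le> (fst (beta k) + snd (beta k)) * ref_volume G q m j"
proof -
  define x y \<mu> where "x = real (q (j - 1))" and "y = real (q j)" and "\<mu> = real (q m)"
  have sizes: "\<mu> \<le> x" "\<mu> \<le> y" "0 \<le> \<mu>"
    using min j by (auto simp: x_def y_def \<mu>_def)
  have vol: "x * y * \<mu> \<le> ref_volume G q m j"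
    using volume_le_ref_volume[OF inst min j] by (simp add: x_def y_def \<mu>_def)
  have cube: "ref_volume G q m j = x ^ 3" if "typeII_coef (leaf_feat G j)"
    using that by (simp add: ref_volume_def x_def)
  obtain X Y where XY: "fst (combine X Y) = (k, l)"
    "size_consistent q X a b" "size_consistent q Y b c"
    "b = Suc a \<longrightarrow> X = leaf_feat G b" "c = Suc b \<longrightarrow> Y = leaf_feat G c"
    using sound by (rule sound_assocE)
  have Suc_j: "Suc (j - 1) = j" using j by simp
  from XY(1-3) \<open>typeII k\<close> obtain s t
    where cost: "term_cost beta q ((k, l), (a, b, c))
        \<le> (fst (beta k) + snd (beta k)) * (s ^ 2 * max s t)"
      and st: "s ^ 2 * max s t \<le> ref_volume G q m j"
  proof (cases rule: term_cost_typeII_cases[where beta = beta])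
    case left
    have ref: "real (q a) ^ 2 * max (real (q a)) (real (q c)) \<le> ref_volume G q m j"
      using form
    proof
      assume abc: "(a, b, c) = (j - 1, j, m)"
      then have "typeII_coef (leaf_feat G j)" using left XY(4) Suc_j by auto
      then show ?thesis
        using abc sizes cube by (simp add: x_def \<mu>_def power3_eq_cube power2_eq_square)
    next
      assume "(a, b, c) = (m, j - 1, j)"
      then show ?thesis
        using left sizes vol by (simp add: x_def y_def \<mu>_def power2_eq_square ac_simps)
    qed
    show thesis
      using left cubic_cost_bounds(3)[OF beta, of "real (q a)" "real (q c)"]
      by (intro that[OF _ ref]) simp
  next
    case right
    have ref: "real (q c) ^ 2 * max (real (q c)) (real (q a)) \<le> ref_volume G q m j"
      using form
    proof
      assume "(a, b, c) = (j - 1, j, m)"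
      then show ?thesis
        using right sizes vol by (simp add: x_def y_def \<mu>_def power2_eq_square ac_simps)
    next
      assume abc: "(a, b, c) = (m, j - 1, j)"
      then have "typeII_coef (leaf_feat G j)" using right XY(5) Suc_j by auto
      moreover from this have "x = y"
        using typeII_coef_leaf_square inst j by (simp add: x_def y_def)
      ultimately show ?thesis
        using abc sizes cube by (simp add: y_def \<mu>_def power3_eq_cube power2_eq_square)
    qed
    show thesis
      using right cubic_cost_bounds(3)[OF beta, of "real (q c)" "real (q a)"]
      by (intro that[OF _ ref]) simp
  qed
  note cost
  also have "(fst (beta k) + snd (beta k)) * (s ^ 2 * max s t)
      \<le> (fst (beta k) + snd (beta k)) * ref_volume G q m j"
    using st beta by (simp add: mult_left_mono)
  finally show ?thesis .
qed

lemma term_cost_le_ref_volume: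
  assumes beta: "0 < fst (beta k)" "0 < snd (beta k)"
    and inst: "is_instance G q" and min: "\<forall>i \<le> len G. q m \<le> q i"
    and j: "1 \<le> j" "j \<le> len G"
    and sound: "sound_assoc G q ((k, l), (a, b, c))"
    and form: "(a, b, c) = (j - 1, j, m) \<or> (a, b, c) = (m, j - 1, j)"
  shows "term_cost beta q ((k, l), (a, b, c)) \<le> (fst (beta k) + snd (beta k)) * ref_volume G q m j"
proof (cases "typeII k")
  case False
  have "real (q m) \<le> real (q j)" using min j by simp
  with form have "real (q a) * real (q b) * real (q c) \<le> ref_volume G q m j"
    using volume_le_ref_volume[OF inst min j] by (auto simp: ac_simps)
  with False beta show ?thesis
    by (simp add: term_cost_typeI mult_mono)
next
  case True
  then show ?thesis
    using typeII_term_cost_le_ref_volume[where beta = beta and k = k, OF beta _ inst min j sound form]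
    by simp
qed

lemma cube_le_term_cost:
  assumes beta: "0 < fst (beta k)" "0 < snd (beta k)"
    and inst: "is_instance G q" and j: "1 \<le> j" "j \<le> len G"
    and coef: "typeII_coef (leaf_feat G j)"
    and sound: "sound_assoc G q ((k, l), (a, b, c))"
    and form: "(a, b, c) = (j - 1, j, z) \<or> (a, b, c) = (z, j - 1, j)"
  shows "min (fst (beta k)) (snd (beta k)) * real (q (j - 1)) ^ 3
    \<le> term_cost beta q ((k, l), (a, b, c))"
proof -
  have square: "q (j - 1) = q j" using typeII_coef_leaf_square[OF inst j coef] .
  obtain X Y where XY: "fst (combine X Y) = (k, l)"
    "size_consistent q X a b" "size_consistent q Y b c"
    "b = Suc a \<longrightarrow> X = leaf_feat G b" "c = Suc b \<longrightarrow> Y = leaf_feat G c"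
    using sound by (rule sound_assocE)
  have Suc_j: "Suc (j - 1) = j" using j by simp
  show ?thesis
  proof (cases "typeII k")
    case False
    have "q a * q b * q c = q (j - 1) ^ 3"
      using form
    proof
      assume abc: "(a, b, c) = (j - 1, j, z)"
      then have "q j = q z"
        using combine_typeII_coef_left[OF XY(1) _ XY(3)] XY(4) coef Suc_j False by auto
      then show ?thesis using abc square by (simp add: power3_eq_cube)
    next
      assume abc: "(a, b, c) = (z, j - 1, j)"
      then have "q z = q (j - 1)"
        using combine_typeII_coef_right[OF XY(1) _ XY(2)] XY(5) coef Suc_j False by auto
      then show ?thesis using abc square by (simp add: power3_eq_cube)
    qed
    then show ?thesis
      using volume_le_term_cost[where beta = beta and k = k, OF beta sound]
      by (simp flip: of_nat_mult of_nat_power)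
  next
    case True
    from XY(1-3) this show ?thesis
    proof (cases rule: term_cost_typeII_cases[where beta = beta])
      case left
      then have "q a = q (j - 1)" using form by auto
      with left cubic_cost_bounds(1)[OF beta] show ?thesis by simp
    next
      case right
      then have "q c = q (j - 1)" using form square by auto
      with right cubic_cost_bounds(1)[OF beta] show ?thesis by simp
    qed
  qed
qed

lemma ref_volume_le_term_cost:
  assumes beta: "0 < fst (beta k)" "0 < snd (beta k)"
    and inst: "is_instance G q" and min: "\<forall>i \<le> len G. q m \<le> q i"
    and j: "1 \<le> j" "j \<le> len G" and z: "z \<le> len G"
    and sound: "sound_assoc G q ((k, l), (a, b, c))"
    and form: "(a, b, c) = (j - 1, j, z) \<or> (a, b, c) = (z, j - 1, j)"
  shows "min (fst (beta k)) (snd (beta k)) * ref_volume G q m j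
    \<le> term_cost beta q ((k, l), (a, b, c))"
proof (cases "typeII_coef (leaf_feat G j)")
  case True
  then show ?thesis
    using cube_le_term_cost[where beta = beta and k = k, OF beta inst j True sound form]
    by (simp add: ref_volume_def)
next
  case False
  have "real (q (j - 1)) * real (q j) * real (q m) \<le> real (q a) * real (q b) * real (q c)"
    using form min z by (auto simp: ac_simps intro!: mult_left_mono mult_right_mono)
  then have "min (fst (beta k)) (snd (beta k)) * ref_volume G q m j
      \<le> min (fst (beta k)) (snd (beta k)) * (real (q a) * real (q b) * real (q c))"
    using False beta by (simp add: ref_volume_def mult_left_mono)
  also have "\<dots> \<le> term_cost beta q ((k, l), (a, b, c))"
    using volume_le_term_cost[where beta = beta and k = k, OF beta sound] .
  finally show ?thesis .
qed

definition cost_ratio :: "(kname \<Rightarrow> real \<times> real) \<Rightarrow> kernel \<Rightarrow> kernel \<Rightarrow> real" where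
  "cost_ratio beta Ke Ko =
     (fst (beta (fst Ke)) + snd (beta (fst Ke))) / min (fst (beta (fst Ko))) (snd (beta (fst Ko)))"

lemma cost_ratio_pos:
  "\<forall>k. 0 < fst (beta k) \<and> 0 < snd (beta k) \<Longrightarrow> 0 < cost_ratio beta Ke Ko"
  by (simp add: cost_ratio_def add_pos_pos)

lemma term_cost_le_cost_ratio:
  assumes pos: "\<forall>k. 0 < fst (beta k) \<and> 0 < snd (beta k)"
    and inst: "is_instance G q" and min: "\<forall>i \<le> len G. q m \<le> q i"
    and j: "1 \<le> j" "j \<le> len G"
    and e: "Ae \<in> variants G" "(Ke, (ae, be, ce)) \<in> set Ae"
      "(ae, be, ce) = (j - 1, j, m) \<or> (ae, be, ce) = (m, j - 1, j)"
    and o: "Ao \<in> variants G" "(Ko, (ao, bo, co)) \<in> set Ao"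
      "(ao, bo, co) = (j - 1, j, z) \<or> (ao, bo, co) = (z, j - 1, j)"
  shows "term_cost beta q (Ke, (ae, be, ce))
    \<le> cost_ratio beta Ke Ko * term_cost beta q (Ko, (ao, bo, co))"
proof -
  obtain ke le ko lo where K: "Ke = (ke, le)" "Ko = (ko, lo)" by fastforce
  have e_sound: "sound_assoc G q ((ke, le), (ae, be, ce))"
    using variant_assoc_sound(1)[OF inst e(1,2)] K by simp
  have o_sound: "sound_assoc G q ((ko, lo), (ao, bo, co))"
    using variant_assoc_sound(1)[OF inst o(1,2)] K by simp
  have "z \<le> len G"
    using o(3) o_sound variant_assoc_sound(2)[OF inst o(1,2)] j by (auto simp: sound_assoc_def)
  define R where "R = ref_volume G q m j"
  define c where "c = min (fst (beta ko)) (snd (beta ko))"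
  have beta_e: "0 < fst (beta ke)" "0 < snd (beta ke)"
    and beta_o: "0 < fst (beta ko)" "0 < snd (beta ko)"
    using pos by auto
  have "term_cost beta q (Ke, (ae, be, ce)) \<le> (fst (beta ke) + snd (beta ke)) * R"
    using term_cost_le_ref_volume[where beta = beta and k = ke, OF beta_e inst min j e_sound e(3)] K
    by (simp add: R_def)
  also have "\<dots> \<le> (fst (beta ke) + snd (beta ke)) * (term_cost beta q (Ko, (ao, bo, co)) / c)"
    using ref_volume_le_term_cost[where beta = beta and k = ko,
        OF beta_o inst min j \<open>z \<le> len G\<close> o_sound o(3)] K beta_e beta_o
    by (intro mult_left_mono) (simp_all add: R_def c_def pos_le_divide_eq mult.commute)
  also have "\<dots> = cost_ratio beta Ke Ko * term_cost beta q (Ko, (ao, bo, co))"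
    by (simp add: cost_ratio_def c_def K)
  finally show ?thesis .
qed

theorem lemma1:
  fixes beta :: "kname \<Rightarrow> real \<times> real"
  assumes "\<forall>k. 0 < fst (beta k) \<and> 0 < snd (beta k)"
  shows "\<forall>Ke Ko. \<exists>\<alpha>::real. 0 < \<alpha> \<and>
    (\<forall>G q m j z Ae Ao ae be ce ao bo co.
       is_instance G q \<and> m \<le> len G \<and> (\<forall>i \<le> len G. q m \<le> q i) \<and>
       1 \<le> j \<and> j \<le> len G \<and>
       Ae \<in> variants G \<and> Ao \<in> variants G \<and>
       (Ke, (ae, be, ce)) \<in> set Ae \<and>
       ((ae, be, ce) = (j - 1, j, m) \<or> (ae, be, ce) = (m, j - 1, j)) \<and>
       (Ko, (ao, bo, co)) \<in> set Ao \<and>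
       ((ao, bo, co) = (j - 1, j, z) \<or> (ao, bo, co) = (z, j - 1, j))
       \<longrightarrow> term_cost beta q (Ke, (ae, be, ce)) \<le> \<alpha> * term_cost beta q (Ko, (ao, bo, co)))"
  using cost_ratio_pos[OF assms] term_cost_le_cost_ratio[OF assms] by blast

end
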